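(* Let $R$ be a ring. (a) If $\dim R=0$ then $R$ is Cohen-Macaulay. (b) If $R$ is a one-dimensional domain then $R$ is Cohen-Macaulay.
   Context: All rings are commutative with identity; $\dim$ is Krull dimension. For $x\in R$ let $C(x)$ be the complex $0\to R\to R_x\to 0$ ($R$ in degree $0$, natural localization map); for a finite sequence $\mathbf x=x_1,\dots,x_\ell$ put $C(\mathbf x)=C(x_1)\otimes_R\cdots\otimes_R C(x_\ell)$ and let $H^i_{\mathbf x}(M)$ be the $i$th cohomology of $C(\mathbf x)\otimes_R M$; $\ell(\mathbf x)=\ell$. Let $K(x)$ be $0\to R\xrightarrow{x}R\to 0$ (degrees $1,0$), $K(\mathbf x)=K(x_1)\otimes\cdots\otimes K(x_\ell)$, $H_i(\mathbf x)$ its homology. For $m\ge n$ the chain map $K(\mathbf x^m)\to K(\mathbf x^n)$ ($\mathbf x^m=x_1^m,\dots,x_\ell^m$) is the tensor product of the maps $K(x_i^m)\to K(x_i^n)$ given by multiplication by $x_i^{m-n}$ in degree $1$ and identity in degree $0$. $\mathbf x$ is weakly proregular if for every $n$ there is $m\ge n$ with $H_i(\mathbf x^m)\to H_i(\mathbf x^n)$ zero for all $i\ge1$. $\mathbf x$ is a parameter sequence on $R$ if it is weakly proregular, $(\mathbf x)R\neq R$, and $H^{\ell(\mathbf x)}_{\mathbf x}(R)_p\neq0$ for every prime $p\supseteq(\mathbf x)R$ (the empty sequence is a parameter sequence, and also a regular sequence). It is a strong parameter sequence if $x_1,\dots,x_i$ is a parameter sequence for each $i=1,\dots,\ell(\mathbf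 x)$. A regular sequence on $M$: each $x_i$ is a non-zero-divisor on $M/(x_1,\dots,x_{i-1})M$ and $M\neq(\mathbf x)M$. A ring $R$ is Cohen-Macaulay if every strong parameter sequence on $R$ is a regular sequence on $R$. *)

theory Defs
  imports Main "HOL-Library.Extended_Real"
begin

definition is_ideal :: "'a::comm_ring_1 set \<Rightarrow> bool" where
  "is_ideal I \<longleftrightarrow> 0 \<in> I \<and> (\<forall>a\<in>I. \<forall>b\<in>I. a + b \<in> I) \<and> (\<forall>r. \<forall>a\<in>I. r * a \<in> I)"

definition prime_ideal :: "'a::comm_ring_1 set \<Rightarrow> bool" where
  "prime_ideal P \<longleftrightarrow> is_ideal P \<and> P \<noteq> UNIV \<and> (\<forall>a b. a * b \<in> P \<longrightarrow> a \<in> P \<or> b \<in> P)"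

text \<open>Krull dimension: supremum of lengths n of strict chains P0 < P1 < ... < Pn of primes.
  Valued in ereal, so the zero ring (no primes) has dimension -infinity.\<close>
definition krull_dim :: "'a::comm_ring_1 itself \<Rightarrow> ereal" where
  "krull_dim _ = Sup {ereal (real n) | n. \<exists>P :: nat \<Rightarrow> 'a set.
      (\<forall>i\<le>n. prime_ideal (P i)) \<and> (\<forall>i<n. P i \<subset> P (Suc i))}"

definition is_domain :: "'a::comm_ring_1 itself \<Rightarrow> bool" where
  "is_domain _ \<longleftrightarrow> (0::'a) \<noteq> 1 \<and> (\<forall>a b::'a. a * b = 0 \<longrightarrow> a = 0 \<or> b = 0)"

definition ideal_of :: "'a::comm_ring_1 list \<Rightarrow> 'a set" where
  "ideal_of xs = {(\<Sum>i<length xs. a i * xs ! i) | a. True}"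

definition pow_seq :: "'a::comm_ring_1 list \<Rightarrow> nat \<Rightarrow> 'a list" where
  "pow_seq xs m = map (\<lambda>x. x ^ m) xs"

text \<open>A chain of degree i is a family of coefficients indexed by the basis elements
  e_S = e_{j1} \<and> ... \<and> e_{ji}, S a subset of {0..<l} of cardinality i (j1 < ... < ji).\<close>
definition koszul_chain :: "nat \<Rightarrow> nat \<Rightarrow> (nat set \<Rightarrow> 'a::comm_ring_1) \<Rightarrow> bool" where
  "koszul_chain l i c \<longleftrightarrow> (\<forall>S. c S \<noteq> 0 \<longrightarrow> S \<subseteq> {..<l} \<and> card S = i)"

text \<open>Differential d(e_S) = sum over j in S of (-1)^(#{k in S. k < j}) x_j e_{S - {j}},
  i.e. the tensor product differential with the Koszul sign rule.\<close>
definition koszul_d :: "'a::comm_ring_1 list \<Rightarrow> (nat set \<Rightarrow> 'a) \<Rightarrow> (nat set \<Rightarrow> 'a)" where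
  "koszul_d xs c = (\<lambda>T. \<Sum>j\<in>{..<length xs} - T.
      (-1) ^ card {k\<in>T. k < j} * xs ! j * c (insert j T))"

definition koszul_cycles :: "'a::comm_ring_1 list \<Rightarrow> nat \<Rightarrow> (nat set \<Rightarrow> 'a) set" where
  "koszul_cycles xs i = {c. koszul_chain (length xs) i c \<and> koszul_d xs c = (\<lambda>_. 0)}"

definition koszul_boundaries :: "'a::comm_ring_1 list \<Rightarrow> nat \<Rightarrow> (nat set \<Rightarrow> 'a) set" where
  "koszul_boundaries xs i = {koszul_d xs b | b. koszul_chain (length xs) (Suc i) b}"

text \<open>The chain map K(x^m) \<rightarrow> K(x^n), k = m - n: tensor product of the maps
  (multiplication by x_j^k in degree 1, identity in degree 0), i.e.
  e_S \<mapsto> (prod_{j in S} x_j^k) e_S.\<close>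
definition koszul_map :: "'a::comm_ring_1 list \<Rightarrow> nat \<Rightarrow> (nat set \<Rightarrow> 'a) \<Rightarrow> (nat set \<Rightarrow> 'a)" where
  "koszul_map xs k c = (\<lambda>S. (\<Prod>j\<in>S. (xs ! j) ^ k) * c S)"

text \<open>H_i(x^m) \<rightarrow> H_i(x^n) is zero: every cycle maps to a boundary.\<close>
definition weakly_proregular :: "'a::comm_ring_1 list \<Rightarrow> bool" where
  "weakly_proregular xs \<longleftrightarrow> (\<forall>n\<ge>1. \<exists>m\<ge>n. \<forall>i\<ge>1.
      \<forall>c\<in>koszul_cycles (pow_seq xs m) i. koszul_map xs (m - n) c \<in> koszul_boundaries (pow_seq xs n) i)"

text \<open>C(x) \<otimes> R has top term R_y, y = x_1 \<cdots> x_l, and H^l_x(R) is the cokernel of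
  the sum of the localization maps R_{y/x_i} \<rightarrow> R_y. An element of R_y is written r/y^n;
  the image of a/(y/x_i)^m is a x_i^m / y^m. So the class of r/y^n vanishes in H^l iff
  r/y^n = sum_i a_i x_i^m / y^m in R_y for some m, a, i.e. y^k (r y^m - y^n sum_i a_i x_i^m) = 0.\<close>
definition cech_top_zero :: "'a::comm_ring_1 list \<Rightarrow> 'a \<Rightarrow> nat \<Rightarrow> bool" where
  "cech_top_zero xs r n \<longleftrightarrow> (\<exists>m k a. (prod_list xs) ^ k *
      (r * (prod_list xs) ^ m - (prod_list xs) ^ n * (\<Sum>i<length xs. a i * (xs ! i) ^ m)) = 0)"

text \<open>(H^l_x(R))_p \<noteq> 0: some element h has h/1 \<noteq> 0, i.e. s h \<noteq> 0 for all s \<notin> p.\<close>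
definition cech_top_localized_nonzero :: "'a::comm_ring_1 list \<Rightarrow> 'a set \<Rightarrow> bool" where
  "cech_top_localized_nonzero xs p \<longleftrightarrow>
     (\<exists>r n. \<forall>s. s \<notin> p \<longrightarrow> \<not> cech_top_zero xs (s * r) n)"

definition parameter_seq :: "'a::comm_ring_1 list \<Rightarrow> bool" where
  "parameter_seq xs \<longleftrightarrow> weakly_proregular xs \<and> ideal_of xs \<noteq> UNIV \<and>
     (\<forall>p. prime_ideal p \<and> ideal_of xs \<subseteq> p \<longrightarrow> cech_top_localized_nonzero xs p)"

definition strong_parameter_seq :: "'a::comm_ring_1 list \<Rightarrow> bool" where
  "strong_parameter_seq xs \<longleftrightarrow> (\<forall>i\<in>{1..length xs}. parameter_seq (take i xs))"

definition regular_seq :: "'a::comm_ring_1 list \<Rightarrow> bool" where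
  "regular_seq xs \<longleftrightarrow>
     (\<forall>i<length xs. \<forall>r. xs ! i * r \<in> ideal_of (take i xs) \<longrightarrow> r \<in> ideal_of (take i xs)) \<and>
     ideal_of xs \<noteq> UNIV"

definition cohen_macaulay :: "'a::comm_ring_1 itself \<Rightarrow> bool" where
  "cohen_macaulay _ \<longleftrightarrow> (\<forall>xs :: 'a list. strong_parameter_seq xs \<longrightarrow> regular_seq xs)"

end

theory Submission
  imports Defs
begin

text \<open>The top Cech cohomology H^l_x(R)_p vanishes as soon as the last element of x is
  nilpotent in (R/(x_1, ..., x_(l-1)))_p, which is the case when p is a minimal prime of
  (x_1, ..., x_(l-1)). In a zero-dimensional ring every prime is minimal, so no single element
  is a parameter sequence and the only strong parameter sequence is the empty one. In a
  one-dimensional domain a parameter element x is nonzero, so every prime containing x is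
  minimal over (x); hence strong parameter sequences have length at most one, and a nonzero
  element of a domain is regular.\<close>

lemma is_ideal_add: "is_ideal I \<Longrightarrow> a \<in> I \<Longrightarrow> b \<in> I \<Longrightarrow> a + b \<in> I"
  by (simp add: is_ideal_def)

lemma is_ideal_mult_left: "is_ideal I \<Longrightarrow> a \<in> I \<Longrightarrow> r * a \<in> I"
  by (simp add: is_ideal_def)

lemma is_ideal_mult_right: "is_ideal I \<Longrightarrow> a \<in> I \<Longrightarrow> a * r \<in> I"
  by (metis is_ideal_mult_left mult.commute)

lemma is_ideal_sum: "is_ideal I \<Longrightarrow> (\<And>i. i \<in> A \<Longrightarrow> f i \<in> I) \<Longrightarrow> sum f A \<in> I"
  by (induction A rule: infinite_finite_induct) (auto simp: is_ideal_def)

lemma is_ideal_Union_chain: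
  assumes "C \<noteq> {}" "\<And>J. J \<in> C \<Longrightarrow> is_ideal J" "\<And>X Y. X \<in> C \<Longrightarrow> Y \<in> C \<Longrightarrow> X \<subseteq> Y \<or> Y \<subseteq> X"
  shows "is_ideal (\<Union>C)"
  unfolding is_ideal_def
proof (intro conjI ballI allI)
  show "0 \<in> \<Union>C" using assms(1,2) by (auto simp: is_ideal_def)
next
  fix a b assume "a \<in> \<Union>C" "b \<in> \<Union>C"
  then obtain X Y where "X \<in> C" "Y \<in> C" "a \<in> X" "b \<in> Y" by blast
  with assms(2,3) show "a + b \<in> \<Union>C" unfolding is_ideal_def by (metis UnionI subset_iff)
next
  fix r a assume "a \<in> \<Union>C"
  then obtain X where "X \<in> C" "a \<in> X" by blast
  with assms(2) show "r * a \<in> \<Union>C" unfolding is_ideal_def by blast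
qed

lemma is_ideal_extend: "is_ideal M \<Longrightarrow> is_ideal {m + r * a | m r. m \<in> M}"
  unfolding is_ideal_def
proof (intro conjI ballI allI; elim conjE)
  assume "0 \<in> M"
  then show "0 \<in> {m + r * a | m r. m \<in> M}" by (intro CollectI exI[of _ 0]) auto
next
  fix x y assume M: "\<forall>a\<in>M. \<forall>b\<in>M. a + b \<in> M"
    and "x \<in> {m + r * a | m r. m \<in> M}" "y \<in> {m + r * a | m r. m \<in> M}"
  then obtain m1 r1 m2 r2 where "x = m1 + r1 * a" "y = m2 + r2 * a" "m1 \<in> M" "m2 \<in> M" by blast
  with M have "x + y = (m1 + m2) + (r1 + r2) * a" "m1 + m2 \<in> M" by (auto simp: algebra_simps)
  then show "x + y \<in> {m + r * a | m r. m \<in> M}" by blast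
next
  fix s x assume M: "\<forall>r. \<forall>a\<in>M. r * a \<in> M" and "x \<in> {m + r * a | m r. m \<in> M}"
  then obtain m1 r1 where "x = m1 + r1 * a" "m1 \<in> M" by blast
  with M have "s * x = s * m1 + (s * r1) * a" "s * m1 \<in> M" by (auto simp: distrib_left)
  then show "s * x \<in> {m + r * a | m r. m \<in> M}" by blast
qed

lemma prime_ideal_one_not_mem: "prime_ideal P \<Longrightarrow> (1::'a::comm_ring_1) \<notin> P"
  unfolding prime_ideal_def is_ideal_def by (metis UNIV_eq_I mult.right_neutral)

lemma prime_ideal_mult_not_mem: "prime_ideal P \<Longrightarrow> a \<notin> P \<Longrightarrow> b \<notin> P \<Longrightarrow> a * b \<notin> P"
  by (auto simp: prime_ideal_def)

lemma prime_ideal_power_not_mem: "prime_ideal P \<Longrightarrow> (t::'a::comm_ring_1) \<notin> P \<Longrightarrow> t ^ n \<notin> P"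
  by (induction n) (auto simp: prime_ideal_one_not_mem prime_ideal_mult_not_mem)

lemma prime_ideal_if_maximal_disjoint:
  fixes M S :: "'a::comm_ring_1 set"
  assumes M: "is_ideal M" and MS: "M \<inter> S = {}"
    and S1: "1 \<in> S" and Smult: "\<And>a b. a \<in> S \<Longrightarrow> b \<in> S \<Longrightarrow> a * b \<in> S"
    and max: "\<And>J. is_ideal J \<Longrightarrow> M \<subseteq> J \<Longrightarrow> J \<inter> S = {} \<Longrightarrow> J = M"
  shows "prime_ideal M"
proof -
  have meets_S: "\<exists>m r. m \<in> M \<and> m + r * a \<in> S" if "a \<notin> M" for a
  proof (rule ccontr)
    assume "\<not> ?thesis"
    then have "{m + r * a | m r. m \<in> M} \<inter> S = {}" by blast
    moreover have "m \<in> {m + r * a | m r. m \<in> M}" if "m \<in> M" for m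
      using that by (intro CollectI exI[of _ m] exI[of _ 0]) simp
    then have "M \<subseteq> {m + r * a | m r. m \<in> M}" by blast
    ultimately have "{m + r * a | m r. m \<in> M} = M" using max is_ideal_extend[OF M] by blast
    moreover have "a = 0 + 1 * a" by simp
    then have "a \<in> {m + r * a | m r. m \<in> M}" using M unfolding is_ideal_def by blast
    ultimately show False using that by blast
  qed
  have "a \<in> M \<or> b \<in> M" if ab: "a * b \<in> M" for a b
  proof (rule ccontr)
    assume "\<not> ?thesis"
    then obtain m1 r1 m2 r2 where h: "m1 \<in> M" "m1 + r1 * a \<in> S" "m2 \<in> M" "m2 + r2 * b \<in> S"
      using meets_S by meson
    have "(m1 + r1 * a) * (m2 + r2 * b) = m1 * (m2 + r2 * b) + r1 * (a * m2) + (r1 * r2) * (a * b)"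
      by (simp add: algebra_simps)
    also have "\<dots> \<in> M"
      using h ab M by (meson is_ideal_add is_ideal_mult_left is_ideal_mult_right)
    finally show False using Smult[OF h(2,4)] MS by blast
  qed
  moreover have "M \<noteq> UNIV" using MS S1 by blast
  ultimately show ?thesis using M by (simp add: prime_ideal_def)
qed

lemma prime_ideal_avoiding:
  fixes I S :: "'a::comm_ring_1 set"
  assumes I: "is_ideal I" and IS: "I \<inter> S = {}"
    and S1: "1 \<in> S" and Smult: "\<And>a b. a \<in> S \<Longrightarrow> b \<in> S \<Longrightarrow> a * b \<in> S"
  shows "\<exists>q. prime_ideal q \<and> I \<subseteq> q \<and> q \<inter> S = {}"
proof -
  define A where "A = {J. is_ideal J \<and> I \<subseteq> J \<and> J \<inter> S = {}}"
  have "\<exists>M\<in>A. \<forall>X\<in>A. M \<subseteq> X \<longrightarrow> X = M"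
  proof (rule subset_Zorn_nonempty)
    show "A \<noteq> {}" using I IS by (auto simp: A_def)
  next
    fix C assume "C \<noteq> {}" "subset.chain A C"
    then have "C \<subseteq> A" "\<And>X Y. X \<in> C \<Longrightarrow> Y \<in> C \<Longrightarrow> X \<subseteq> Y \<or> Y \<subseteq> X"
      by (auto simp: subset.chain_def)
    with \<open>C \<noteq> {}\<close> show "\<Union>C \<in> A"
      using is_ideal_Union_chain[of C] by (auto simp: A_def)
  qed
  then obtain M where "M \<in> A" and "\<forall>X\<in>A. M \<subseteq> X \<longrightarrow> X = M" by blast
  then have "prime_ideal M"
    by (intro prime_ideal_if_maximal_disjoint[OF _ _ S1 Smult]) (auto simp: A_def)
  with \<open>M \<in> A\<close> show ?thesis by (auto simp: A_def)
qed

definition minimal_prime_over :: "'a::comm_ring_1 set \<Rightarrow> 'a set \<Rightarrow> bool" where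
  "minimal_prime_over I p \<longleftrightarrow> prime_ideal p \<and> I \<subseteq> p \<and>
     (\<forall>q. prime_ideal q \<and> I \<subseteq> q \<and> q \<subseteq> p \<longrightarrow> q = p)"

lemma minimal_prime_over_nilpotent:
  fixes I p :: "'a::comm_ring_1 set"
  assumes I: "is_ideal I" and p: "minimal_prime_over I p" and y: "y \<in> p"
  shows "\<exists>t N. t \<notin> p \<and> t * y ^ N \<in> I"
proof (rule ccontr)
  assume no_witness: "\<not> ?thesis"
  define S where "S = {t * y ^ N | t N. t \<notin> p}"
  have pp: "prime_ideal p" using p by (simp add: minimal_prime_over_def)
  have notp_S: "z \<in> S" if "z \<notin> p" for z
    unfolding S_def using that by (intro CollectI exI[of _ z] exI[of _ 0]) simp
  have y_S: "y \<in> S"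
    unfolding S_def using prime_ideal_one_not_mem[OF pp]
    by (intro CollectI exI[of _ 1] exI[of _ 1]) simp
  have S_mult: "a * b \<in> S" if ab: "a \<in> S" "b \<in> S" for a b
  proof -
    obtain t1 N1 t2 N2 where "a = t1 * y ^ N1" "b = t2 * y ^ N2" "t1 \<notin> p" "t2 \<notin> p"
      using ab unfolding S_def by blast
    then have "a * b = (t1 * t2) * y ^ (N1 + N2)" "t1 * t2 \<notin> p"
      using prime_ideal_mult_not_mem[OF pp] by (simp_all add: power_add mult_ac)
    then show ?thesis unfolding S_def by blast
  qed
  have "I \<inter> S = {}" using no_witness unfolding S_def by blast
  then obtain q where q: "prime_ideal q" "I \<subseteq> q" "q \<inter> S = {}"
    using prime_ideal_avoiding[OF I _ notp_S[OF prime_ideal_one_not_mem[OF pp]] S_mult] by blast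
  then have "q \<subseteq> p" "y \<notin> q" using notp_S y_S by blast+
  with p q y show False unfolding minimal_prime_over_def by blast
qed

lemma exists_prime_ideal_over:
  fixes J :: "'a::comm_ring_1 set"
  assumes "is_ideal J" "J \<noteq> UNIV"
  shows "\<exists>p. prime_ideal p \<and> J \<subseteq> p"
proof -
  have "1 \<notin> J"
    using assms is_ideal_mult_right[of J 1] by auto
  then show ?thesis
    using prime_ideal_avoiding[OF assms(1), of "{1}"] by auto
qed

lemma is_ideal_ideal_of: "is_ideal (ideal_of xs)"
  unfolding is_ideal_def ideal_of_def
proof (intro conjI ballI allI)
  show "0 \<in> {\<Sum>i<length xs. a i * xs ! i |a. True}"
    by (intro CollectI exI[of _ "\<lambda>_. 0"]) simp
next
  fix u v
  assume "u \<in> {\<Sum>i<length xs. a i * xs ! i |a. True}" "v \<in> {\<Sum>i<length xs. a i * xs ! i |a. True}"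
  then obtain a b where "u = (\<Sum>i<length xs. a i * xs ! i)" "v = (\<Sum>i<length xs. b i * xs ! i)" by blast
  then have "u + v = (\<Sum>i<length xs. (a i + b i) * xs ! i)" by (simp add: distrib_right sum.distrib)
  then show "u + v \<in> {\<Sum>i<length xs. a i * xs ! i |a. True}"
    by (intro CollectI exI[of _ "\<lambda>i. a i + b i"]) simp
next
  fix r u assume "u \<in> {\<Sum>i<length xs. a i * xs ! i |a. True}"
  then obtain a where "u = (\<Sum>i<length xs. a i * xs ! i)" by blast
  then have "r * u = (\<Sum>i<length xs. (r * a i) * xs ! i)" by (simp add: mult.assoc sum_distrib_left)
  then show "r * u \<in> {\<Sum>i<length xs. a i * xs ! i |a. True}"
    by (intro CollectI exI[of _ "\<lambda>i. r * a i"]) simp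
qed

lemma ideal_of_subset: "is_ideal P \<Longrightarrow> set xs \<subseteq> P \<Longrightarrow> ideal_of xs \<subseteq> P"
  unfolding ideal_of_def by (auto intro!: is_ideal_sum is_ideal_mult_left)

lemma nth_mem_ideal_of: "i < length xs \<Longrightarrow> xs ! i \<in> ideal_of xs"
  unfolding ideal_of_def
  by (intro CollectI exI[of _ "\<lambda>j. of_bool (j = i)"]) (simp add: Int_absorb1)

lemma ideal_of_Nil: "ideal_of [] = {0}"
  unfolding ideal_of_def by simp

lemma ideal_of_single: "ideal_of [x] = {u * x | u. True}"
  unfolding ideal_of_def by auto

lemma chain_length_le_krull_dim:
  fixes P :: "nat \<Rightarrow> 'a::comm_ring_1 set"
  assumes "\<And>i. i \<le> n \<Longrightarrow> prime_ideal (P i)" "\<And>i. i < n \<Longrightarrow> P i \<subset> P (Suc i)"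
  shows "ereal (real n) \<le> krull_dim TYPE('a)"
  unfolding krull_dim_def using assms by (intro Sup_upper) blast

lemma krull_dim_le_0_prime_ideal_minimal:
  fixes p q :: "'a::comm_ring_1 set"
  assumes "krull_dim TYPE('a) \<le> 0" "prime_ideal q" "prime_ideal p" "q \<subseteq> p"
  shows "q = p"
proof (rule ccontr)
  assume "q \<noteq> p"
  then have "ereal (real 1) \<le> krull_dim TYPE('a)"
    using assms by (intro chain_length_le_krull_dim[of 1 "\<lambda>i. if i = 0 then q else p"]) auto
  from order_trans[OF this assms(1)] show False by simp
qed

lemma krull_dim_le_1_no_chain:
  fixes a b c :: "'a::comm_ring_1 set"
  assumes "krull_dim TYPE('a) \<le> 1" "prime_ideal a" "prime_ideal b" "prime_ideal c" "a \<subset> b" "b \<subset> c"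
  shows False
proof -
  have "ereal (real 2) \<le> krull_dim TYPE('a)"
  proof (rule chain_length_le_krull_dim[of 2 "\<lambda>i. if i = 0 then a else if i = 1 then b else c"])
    show "prime_ideal (if i = 0 then a else if i = 1 then b else c)" for i
      using assms by simp
    show "(if i = 0 then a else if i = 1 then b else c) \<subset> (if Suc i = 0 then a else if Suc i = 1 then b else c)"
      if "i < 2" for i
      using assms that by (auto simp: less_2_cases_iff)
  qed
  from order_trans[OF this assms(1)] show False by simp
qed

lemma krull_dim_trivial_ring:
  assumes "(0::'a::comm_ring_1) = 1"
  shows "krull_dim TYPE('a) = -\<infinity>"
proof -
  have "\<not> prime_ideal (P :: 'a set)" for P
    using assms by (metis prime_ideal_def is_ideal_def UNIV_eq_I mult_1 mult_zero_left)
  then have "{ereal (real n) | n. \<exists>P :: nat \<Rightarrow> 'a set.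
      (\<forall>i\<le>n. prime_ideal (P i)) \<and> (\<forall>i<n. P i \<subset> P (Suc i))} = {}"
    by blast
  then show ?thesis
    unfolding krull_dim_def by (simp only:) (simp add: bot_ereal_def)
qed

lemma is_domain_prime_ideal_zero:
  assumes "is_domain TYPE('a::comm_ring_1)"
  shows "prime_ideal ({0} :: 'a set)"
proof -
  have "(1::'a) \<notin> {0}" using assms by (simp add: is_domain_def)
  then have "{0::'a} \<noteq> UNIV" by blast
  then show ?thesis
    using assms unfolding prime_ideal_def is_ideal_def is_domain_def by auto
qed

lemma cech_top_zeroI:
  "prod_list xs ^ k * (r * prod_list xs ^ m - prod_list xs ^ n * (\<Sum>i<length xs. a i * xs ! i ^ m)) = 0
   \<Longrightarrow> cech_top_zero xs r n"
  unfolding cech_top_zero_def by blast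

lemma not_cech_top_localized_nonzero_single:
  assumes "t \<notin> p" "t * x ^ N = 0"
  shows "\<not> cech_top_localized_nonzero [x] p"
proof -
  have "cech_top_zero [x] (t * r) n" for r n
    using assms(2) by (intro cech_top_zeroI[where m=0 and k=N and a="\<lambda>_. 0"]) (simp add: mult_ac)
  with assms(1) show ?thesis
    unfolding cech_top_localized_nonzero_def by blast
qed

lemma not_cech_top_localized_nonzero_pair:
  assumes p: "prime_ideal p" and t: "t \<notin> p" and u: "t * y ^ N = u * x"
  shows "\<not> cech_top_localized_nonzero [x, y] p"
proof -
  \<comment> \<open>t^n y^(Nn) = u^n x^n, so t^n r/(xy)^n = r u^n x^m/(xy)^m with m = n + Nn comes from R_y\<close>
  have "cech_top_zero [x, y] (t ^ n * r) n" for r n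
  proof (rule cech_top_zeroI[where m="n + N * n" and k=0 and a="\<lambda>i. if i = 0 then r * u ^ n else 0"])
    let ?m = "n + N * n"
    have "t ^ n * r * (x * y) ^ ?m = r * x ^ ?m * y ^ n * (t * y ^ N) ^ n"
      by (simp add: power_add power_mult power_mult_distrib mult_ac)
    also have "\<dots> = (x * y) ^ n * (r * u ^ n * x ^ ?m)"
      unfolding u by (simp add: power_mult_distrib mult_ac)
    finally show "prod_list [x, y] ^ 0 * (t ^ n * r * prod_list [x, y] ^ ?m - prod_list [x, y] ^ n *
      (\<Sum>i<length [x, y]. (if i = 0 then r * u ^ n else 0) * [x, y] ! i ^ ?m)) = 0"
      by (simp add: numeral_2_eq_2)
  qed
  with prime_ideal_power_not_mem[OF p t] show ?thesis
    unfolding cech_top_localized_nonzero_def by blast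
qed

lemma parameter_seq_prime_ideal_over:
  assumes "parameter_seq xs"
  obtains p where "prime_ideal p" "ideal_of xs \<subseteq> p" "cech_top_localized_nonzero xs p"
  using assms exists_prime_ideal_over[OF is_ideal_ideal_of] unfolding parameter_seq_def by blast

lemma not_parameter_seq_single_if_krull_dim_le_0:
  assumes "krull_dim TYPE('a::comm_ring_1) \<le> 0"
  shows "\<not> parameter_seq [x::'a]"
proof
  assume "parameter_seq [x]"
  then obtain p where p: "prime_ideal p" "ideal_of [x] \<subseteq> p" "cech_top_localized_nonzero [x] p"
    by (rule parameter_seq_prime_ideal_over)
  have "minimal_prime_over {0} p"
    using p krull_dim_le_0_prime_ideal_minimal[OF assms]
    by (auto simp: minimal_prime_over_def prime_ideal_def is_ideal_def)
  moreover have "x \<in> p" using p nth_mem_ideal_of[of 0 "[x]"] by auto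
  moreover have "is_ideal {0::'a}" by (simp add: is_ideal_def)
  ultimately obtain t N where "t \<notin> p" "t * x ^ N = 0"
    using minimal_prime_over_nilpotent by blast
  then show False
    using p(3) not_cech_top_localized_nonzero_single by blast
qed

lemma parameter_seq_single_nonzero:
  assumes "is_domain TYPE('a::comm_ring_1)" "parameter_seq [x::'a]"
  shows "x \<noteq> 0"
proof
  assume "x = 0"
  have "prime_ideal {0::'a}" using is_domain_prime_ideal_zero[OF assms(1)] .
  moreover have "ideal_of [x] \<subseteq> {0}" using \<open>x = 0\<close> by (simp add: ideal_of_single)
  ultimately have "cech_top_localized_nonzero [x] {0}"
    using assms(2) by (simp add: parameter_seq_def)
  moreover have "(1::'a) \<notin> {0}" using assms(1) by (simp add: is_domain_def)
  ultimately show False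
    using not_cech_top_localized_nonzero_single[of 1 "{0}" x 1] \<open>x = 0\<close> by simp
qed

lemma not_parameter_seq_pair_if_krull_dim_le_1:
  assumes D: "is_domain TYPE('a::comm_ring_1)" and d: "krull_dim TYPE('a) \<le> 1" and "x \<noteq> 0"
  shows "\<not> parameter_seq [x::'a, y]"
proof
  assume "parameter_seq [x, y]"
  then obtain p where p: "prime_ideal p" "ideal_of [x, y] \<subseteq> p" "cech_top_localized_nonzero [x, y] p"
    by (rule parameter_seq_prime_ideal_over)
  have "x \<in> p" "y \<in> p" using p nth_mem_ideal_of[of _ "[x, y]"] by force+
  have "minimal_prime_over (ideal_of [x]) p"
    unfolding minimal_prime_over_def
  proof (intro conjI allI impI)
    show "ideal_of [x] \<subseteq> p"
      using p \<open>x \<in> p\<close> by (intro ideal_of_subset) (auto simp: prime_ideal_def)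
    fix q assume q: "prime_ideal q \<and> ideal_of [x] \<subseteq> q \<and> q \<subseteq> p"
    then have "{0} \<subset> q"
      using \<open>x \<noteq> 0\<close> nth_mem_ideal_of[of 0 "[x]"] by (auto simp: prime_ideal_def is_ideal_def)
    then show "q = p"
      using krull_dim_le_1_no_chain[OF d is_domain_prime_ideal_zero[OF D] _ p(1)] q by blast
  qed (rule p(1))
  then obtain t N where "t \<notin> p" "t * y ^ N \<in> ideal_of [x]"
    using minimal_prime_over_nilpotent[OF is_ideal_ideal_of _ \<open>y \<in> p\<close>] by blast
  then obtain u where "t * y ^ N = u * x" by (auto simp: ideal_of_single)
  with p(1,3) \<open>t \<notin> p\<close> show False
    using not_cech_top_localized_nonzero_pair by blast
qed

lemma regular_seq_Nil: "regular_seq ([] :: 'a::comm_ring_1 list) \<longleftrightarrow> (0::'a) \<noteq> 1"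
proof -
  have "{0::'a} = UNIV \<longleftrightarrow> (0::'a) = 1"
    by (metis UNIV_I UNIV_eq_I mult_1_right mult_zero_right singletonD singletonI)
  then show ?thesis by (simp add: regular_seq_def ideal_of_Nil)
qed

lemma regular_seq_single:
  "regular_seq [x] \<longleftrightarrow> (\<forall>r. x * r = 0 \<longrightarrow> r = 0) \<and> ideal_of [x] \<noteq> UNIV"
  by (simp add: regular_seq_def ideal_of_Nil)

lemma strong_parameter_seq_take:
  "strong_parameter_seq xs \<Longrightarrow> 1 \<le> i \<Longrightarrow> i \<le> length xs \<Longrightarrow> parameter_seq (take i xs)"
  unfolding strong_parameter_seq_def by auto

lemma cohen_macaulay_if_krull_dim_0:
  assumes "krull_dim TYPE('a::comm_ring_1) = 0"
  shows "cohen_macaulay TYPE('a)"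
  unfolding cohen_macaulay_def
proof (intro allI impI)
  fix xs :: "'a list"
  assume xs: "strong_parameter_seq xs"
  show "regular_seq xs"
  proof (cases xs)
    case Nil
    have "(0::'a) \<noteq> 1" using krull_dim_trivial_ring assms by force
    with Nil show ?thesis by (simp add: regular_seq_Nil)
  next
    case (Cons x _)
    then have "parameter_seq [x]" using strong_parameter_seq_take[OF xs, of 1] by simp
    with assms show ?thesis using not_parameter_seq_single_if_krull_dim_le_0[of x] by simp
  qed
qed

lemma cohen_macaulay_if_domain_krull_dim_le_1:
  assumes D: "is_domain TYPE('a::comm_ring_1)" and d: "krull_dim TYPE('a) \<le> 1"
  shows "cohen_macaulay TYPE('a)"
  unfolding cohen_macaulay_def
proof (intro allI impI)
  fix xs :: "'a list"
  assume xs: "strong_parameter_seq xs"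
  show "regular_seq xs"
  proof (cases xs rule: remdups_adj.cases)
    case 1
    with D show ?thesis by (simp add: regular_seq_Nil is_domain_def)
  next
    case (2 x)
    then have "parameter_seq [x]" using strong_parameter_seq_take[OF xs, of 1] by simp
    then have "x \<noteq> 0" "ideal_of [x] \<noteq> UNIV"
      using parameter_seq_single_nonzero[OF D] by (auto simp: parameter_seq_def)
    with D 2 show ?thesis by (auto simp: regular_seq_single is_domain_def)
  next
    case (3 x y _)
    then have "parameter_seq [x]" "parameter_seq [x, y]"
      using strong_parameter_seq_take[OF xs, of 1] strong_parameter_seq_take[OF xs, of 2]
      by (simp_all add: numeral_2_eq_2)
    then show ?thesis
      using parameter_seq_single_nonzero[OF D] not_parameter_seq_pair_if_krull_dim_le_1[OF D d] by blast
  qed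
qed

theorem proposition4p4:
  shows "(krull_dim TYPE('a::comm_ring_1) = 0 \<longrightarrow> cohen_macaulay TYPE('a))
       \<and> (is_domain TYPE('a) \<and> krull_dim TYPE('a) = 1 \<longrightarrow> cohen_macaulay TYPE('a))"
proof (intro conjI impI)
  show "cohen_macaulay TYPE('a)" if "krull_dim TYPE('a) = 0"
    using that by (rule cohen_macaulay_if_krull_dim_0)
  show "cohen_macaulay TYPE('a)" if "is_domain TYPE('a) \<and> krull_dim TYPE('a) = 1"
    using that by (simp add: cohen_macaulay_if_domain_krull_dim_le_1)
qed

end
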